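(* Let $y_1,\dots,y_n$ be $(n-1)$ times continuously differentiable on an open interval $I$. For $h\ne 0$ let $C_n^h(x)$ be the determinant of the $n\times n$ matrix whose $(i,j)$ entry is $y_j(x+(i-1)h)$, and let $W_n(x)$ be the determinant of the $n\times n$ matrix whose $(i,j)$ entry is $y_j^{(i-1)}(x)$, $i,j=1,\dots,n$. Then for every $x\in I$, $$\lim_{h\to 0}\frac{C_n^h(x)}{h^{n(n-1)/2}}=W_n(x).$$ *)

theory Defs
  imports "HOL-Analysis.Derivative" "Jordan_Normal_Form.Determinant"
begin

definition C_k_on :: "nat \<Rightarrow> real set \<Rightarrow> (real \<Rightarrow> real) \<Rightarrow> bool" where
  "C_k_on k S f \<longleftrightarrow>
     (\<forall>m<k. \<forall>x\<in>S. (deriv ^^ m) f differentiable (at x)) \<and>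
     continuous_on S ((deriv ^^ k) f)"

text \<open>Casoratian-type determinant C_n^h(x); indices shifted to start at 0.\<close>
definition casorati_det :: "nat \<Rightarrow> (nat \<Rightarrow> real \<Rightarrow> real) \<Rightarrow> real \<Rightarrow> real \<Rightarrow> real" where
  "casorati_det n y h x = det (mat n n (\<lambda>(i, j). y j (x + real i * h)))"

text \<open>Wronskian W_n(x); indices shifted to start at 0.\<close>
definition wronskian :: "nat \<Rightarrow> (nat \<Rightarrow> real \<Rightarrow> real) \<Rightarrow> real \<Rightarrow> real" where
  "wronskian n y x = det (mat n n (\<lambda>(i, j). (deriv ^^ i) (y j) x))"

end

theory Submission
  imports Defs
begin

text \<open>With \<open>\<Delta>\<^sub>h g t = (g (t + h) - g t) / h\<close>, the binomial formula
  \<open>h^i \<Delta>\<^sub>h^i g t = (\<Sum>k\<le>i. (-1)^(i-k) (i choose k) g (t + k h))\<close> exhibits the matrix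
  \<open>(h^i \<Delta>\<^sub>h^i y\<^sub>j x)\<close> as a unitriangular matrix times the Casoratian matrix, hence
  \<open>C\<^sub>n\<^sup>h(x) = h^(n(n-1)/2) det (\<Delta>\<^sub>h^i y\<^sub>j x)\<close>. Iterating the mean value theorem,
  \<open>\<Delta>\<^sub>h^i g t \<rightarrow> g\<^sup>(\<^sup>i\<^sup>)(x)\<close> as \<open>h \<rightarrow> 0\<close> and \<open>t \<rightarrow> x\<close>, and the determinant is continuous
  in its entries.\<close>

definition diff_quot :: "real \<Rightarrow> (real \<Rightarrow> real) \<Rightarrow> real \<Rightarrow> real" where
  "diff_quot h g t = (g (t + h) - g t) / h"

lemma signed_binomial_Suc_Suc:
  "k \<le> i \<Longrightarrow> (-1) ^ (Suc i - Suc k) * real (Suc i choose Suc k) =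
     (-1) ^ (i - k) * real (i choose k) - (-1) ^ (i - Suc k) * real (i choose Suc k)"
proof (cases "k = i")
  case False
  moreover assume "k \<le> i"
  ultimately have "i - k = Suc (i - Suc k)" by simp
  then show ?thesis by (simp add: algebra_simps)
qed simp

lemma diff_quot_funpow_binomial:
  assumes "h \<noteq> 0"
  shows "h ^ i * (diff_quot h ^^ i) g t =
    (\<Sum>k\<le>i. (-1) ^ (i - k) * real (i choose k) * g (t + real k * h))"
proof (induction i arbitrary: t)
  case 0
  show ?case by simp
next
  case (Suc i)
  define b where "b i k = (-1) ^ (i - k) * real (i choose k)" for i k
  define G where "G k = g (t + real k * h)" for k
  have "h ^ Suc i * (diff_quot h ^^ Suc i) g t =
      h ^ i * (diff_quot h ^^ i) g (t + h) - h ^ i * (diff_quot h ^^ i) g t"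
    using assms by (simp add: diff_quot_def field_simps)
  also have "\<dots> = (\<Sum>k\<le>i. b i k * G (Suc k)) - (\<Sum>k\<le>i. b i k * G k)"
    by (simp add: Suc.IH b_def G_def algebra_simps)
  also have "(\<Sum>k\<le>i. b i k * G k) = b i 0 * G 0 + (\<Sum>k\<le>i. b i (Suc k) * G (Suc k))"
    by (subst sum.atMost_Suc_shift[symmetric]) (simp add: sum.atMost_Suc b_def)
  also have "(\<Sum>k\<le>i. b i k * G (Suc k)) - (b i 0 * G 0 + (\<Sum>k\<le>i. b i (Suc k) * G (Suc k))) =
      b (Suc i) 0 * G 0 + (\<Sum>k\<le>i. b (Suc i) (Suc k) * G (Suc k))"
  proof -
    have "b (Suc i) (Suc k) = b i k - b i (Suc k)" if "k \<le> i" for k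
      using signed_binomial_Suc_Suc[OF that] by (simp only: b_def)
    then show ?thesis
      by (simp add: b_def sum_subtractf left_diff_distrib del: binomial_Suc_Suc)
  qed
  also have "\<dots> = (\<Sum>k\<le>Suc i. b (Suc i) k * G k)"
    by (rule sum.atMost_Suc_shift[symmetric])
  finally show ?case by (simp add: b_def G_def)
qed

lemma has_real_derivative_diff_quot_funpow:
  assumes "\<And>k. k \<le> i \<Longrightarrow> (g has_real_derivative g' (s + real k * h)) (at (s + real k * h))"
  shows "((diff_quot h ^^ i) g has_real_derivative (diff_quot h ^^ i) g' s) (at s)"
  using assms
proof (induction i arbitrary: g g')
  case 0
  then show ?case by simp
next
  case (Suc i)
  have "(diff_quot h g has_real_derivative diff_quot h g' (s + real k * h)) (at (s + real k * h))"
    if "k \<le> i" for k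
  proof -
    let ?u = "s + real k * h"
    have "(g has_real_derivative g' ?u) (at ?u)"
      using Suc.prems that by simp
    moreover have "(g has_real_derivative g' (?u + h)) (at (?u + h))"
      using Suc.prems[of "Suc k"] that by (simp add: algebra_simps)
    then have "((\<lambda>t. g (t + h)) has_real_derivative g' (?u + h)) (at ?u)"
      by (simp add: DERIV_shift)
    ultimately have "((\<lambda>t. (g (t + h) - g t) / h) has_real_derivative (g' (?u + h) - g' ?u) / h) (at ?u)"
      by (intro DERIV_cdivide DERIV_diff)
    then show ?thesis
      by (simp add: diff_quot_def[abs_def])
  qed
  from Suc.IH[OF this] show ?case
    by (simp add: funpow_Suc_right del: funpow.simps)
qed

lemma diff_quot_mean_value:
  assumes "h \<noteq> 0" and "\<And>u. \<bar>u - t\<bar> \<le> \<bar>h\<bar> \<Longrightarrow> (G has_real_derivative G' u) (at u)"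
  obtains z where "\<bar>z - t\<bar> < \<bar>h\<bar>" and "diff_quot h G t = G' z"
proof (cases "h > 0")
  case True
  with assms MVT2[of t "t + h" G G'] obtain z where "t < z" "z < t + h" "G (t + h) - G t = h * G' z"
    by fastforce
  with True show ?thesis by (intro that[of z]) (auto simp: diff_quot_def)
next
  case False
  with assms have "h < 0" by simp
  with assms MVT2[of "t + h" t G G'] obtain z where "t + h < z" "z < t" "G t - G (t + h) = - h * G' z"
    by fastforce
  with \<open>h < 0\<close> show ?thesis by (intro that[of z]) (auto simp: diff_quot_def field_simps)
qed

lemma diff_quot_funpow_Suc_mean_value:
  assumes "h \<noteq> 0"
    and "\<And>s. \<bar>s - t\<bar> \<le> real (Suc i) * \<bar>h\<bar> \<Longrightarrow> (g has_real_derivative g' s) (at s)"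
  obtains z where "\<bar>z - t\<bar> < \<bar>h\<bar>" and "(diff_quot h ^^ Suc i) g t = (diff_quot h ^^ i) g' z"
proof -
  have "((diff_quot h ^^ i) g has_real_derivative (diff_quot h ^^ i) g' u) (at u)"
    if "\<bar>u - t\<bar> \<le> \<bar>h\<bar>" for u
  proof (rule has_real_derivative_diff_quot_funpow)
    fix k assume "k \<le> i"
    then have "\<bar>real k * h\<bar> \<le> real i * \<bar>h\<bar>"
      by (simp add: abs_mult mult_right_mono)
    with that have "\<bar>u + real k * h - t\<bar> \<le> real (Suc i) * \<bar>h\<bar>"
      by (simp add: algebra_simps)
    then show "(g has_real_derivative g' (u + real k * h)) (at (u + real k * h))"
      by (rule assms(2))
  qed
  with assms(1) obtain z where "\<bar>z - t\<bar> < \<bar>h\<bar>" "diff_quot h ((diff_quot h ^^ i) g) t = (diff_quot h ^^ i) g' z"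
    by (rule diff_quot_mean_value)
  with that show ?thesis by simp
qed

lemma deriv_funpow_Suc: "(deriv ^^ Suc m) g = (deriv ^^ m) (deriv g)"
  by (simp only: funpow_Suc_right comp_apply)

text \<open>Uniformity in \<open>t\<close> is what lets the induction go through: the mean value theorem
  trades \<open>\<Delta>\<^sub>h^(i+1) g t\<close> for \<open>\<Delta>\<^sub>h^i g' z\<close> at a nearby point \<open>z\<close>.\<close>
lemma diff_quot_funpow_uniform_limit:
  assumes "open I" "x \<in> I"
    and "\<And>m z. m < i \<Longrightarrow> z \<in> I \<Longrightarrow> (deriv ^^ m) g differentiable at z"
    and "isCont ((deriv ^^ i) g) x" and "e > 0"
  shows "\<exists>\<delta>>0. \<forall>h t. h \<noteq> 0 \<longrightarrow> \<bar>h\<bar> < \<delta> \<longrightarrow> \<bar>t - x\<bar> < \<delta> \<longrightarrow>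
    \<bar>(diff_quot h ^^ i) g t - (deriv ^^ i) g x\<bar> < e"
  using assms(3,4)
proof (induction i arbitrary: g)
  case 0
  then obtain \<delta> where "\<delta> > 0" "\<And>t. \<bar>t - x\<bar> < \<delta> \<Longrightarrow> \<bar>g t - g x\<bar> < e"
    using \<open>e > 0\<close> by (auto simp: continuous_at_eps_delta dist_real_def)
  then show ?case by (intro exI[of _ \<delta>]) auto
next
  case (Suc i)
  have "(deriv ^^ m) (deriv g) differentiable at z" if "m < i" "z \<in> I" for m z
    using Suc.prems(1)[of "Suc m" z] that by (simp only: deriv_funpow_Suc Suc_less_eq)
  moreover have "isCont ((deriv ^^ i) (deriv g)) x"
    using Suc.prems(2) by (simp only: deriv_funpow_Suc)
  ultimately obtain d where d: "d > 0" "\<And>h t. h \<noteq> 0 \<Longrightarrow> \<bar>h\<bar> < d \<Longrightarrow> \<bar>t - x\<bar> < d \<Longrightarrow>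
      \<bar>(diff_quot h ^^ i) (deriv g) t - (deriv ^^ Suc i) g x\<bar> < e"
    using Suc.IH[of "deriv g"] by (auto simp only: deriv_funpow_Suc)
  obtain r where r: "r > 0" "ball x r \<subseteq> I"
    using assms(1,2) openE by blast
  define \<delta> where "\<delta> = min (d / 2) (r / (real i + 2))"
  have "\<delta> > 0" using d r by (simp add: \<delta>_def)
  moreover have "\<bar>(diff_quot h ^^ Suc i) g t - (deriv ^^ Suc i) g x\<bar> < e"
    if h: "h \<noteq> 0" "\<bar>h\<bar> < \<delta>" and t: "\<bar>t - x\<bar> < \<delta>" for h t
  proof -
    have "(g has_real_derivative deriv g s) (at s)" if s: "\<bar>s - t\<bar> \<le> real (Suc i) * \<bar>h\<bar>" for s
    proof -
      have "real (Suc i) * \<bar>h\<bar> \<le> real (Suc i) * \<delta>"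
        using h by (intro mult_left_mono) auto
      moreover have "real (Suc i) * \<delta> + \<delta> = (real i + 2) * \<delta>"
        by (simp add: algebra_simps)
      moreover have "\<delta> \<le> r / (real i + 2)"
        by (simp add: \<delta>_def)
      then have "(real i + 2) * \<delta> \<le> r"
        by (simp add: field_simps)
      ultimately have "\<bar>s - x\<bar> < r"
        using s t by linarith
      then have "s \<in> I"
        using r by (auto simp: dist_real_def abs_minus_commute)
      then show ?thesis
        using Suc.prems(1)[of 0] by (simp add: DERIV_deriv_iff_real_differentiable)
    qed
    with h(1) obtain z where z: "\<bar>z - t\<bar> < \<bar>h\<bar>"
      and eq: "(diff_quot h ^^ Suc i) g t = (diff_quot h ^^ i) (deriv g) z"
      by (rule diff_quot_funpow_Suc_mean_value)
    have "\<bar>h\<bar> < d / 2" "\<bar>t - x\<bar> < d / 2"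
      using h t by (auto simp: \<delta>_def)
    with z have "\<bar>z - x\<bar> < d" "\<bar>h\<bar> < d"
      by linarith+
    with d(2)[OF h(1)] eq show ?thesis
      by simp
  qed
  ultimately show ?case by blast
qed

lemma C_k_on_diff_quot_funpow_tendsto:
  assumes "C_k_on k I g" "open I" "x \<in> I" "i \<le> k"
  shows "((\<lambda>h. (diff_quot h ^^ i) g x) \<longlongrightarrow> (deriv ^^ i) g x) (at 0)"
proof -
  have diff: "(deriv ^^ m) g differentiable at z" if "m < i" "z \<in> I" for m z
    using assms(1,4) that by (simp add: C_k_on_def)
  have "isCont ((deriv ^^ i) g) x"
  proof (cases "i < k")
    case True
    then show ?thesis
      using assms(1,3) by (simp add: C_k_on_def differentiable_imp_continuous_within)
  next
    case False
    with assms show ?thesis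
      by (simp add: C_k_on_def continuous_on_eq_continuous_at)
  qed
  note uniform = diff_quot_funpow_uniform_limit[OF assms(2,3) diff this]
  show ?thesis
    unfolding LIM_eq
  proof (intro allI impI)
    fix e :: real assume "e > 0"
    with uniform obtain \<delta> where "\<delta> > 0" "\<forall>h t. h \<noteq> 0 \<longrightarrow> \<bar>h\<bar> < \<delta> \<longrightarrow> \<bar>t - x\<bar> < \<delta> \<longrightarrow>
        \<bar>(diff_quot h ^^ i) g t - (deriv ^^ i) g x\<bar> < e"
      by blast
    then show "\<exists>s>0. \<forall>h. h \<noteq> 0 \<and> norm (h - 0) < s \<longrightarrow>
        norm ((diff_quot h ^^ i) g x - (deriv ^^ i) g x) < e"
      by (intro exI[of _ \<delta>]) auto
  qed
qed

lemma det_mat_Leibniz: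
  "det (mat n n (\<lambda>(i, j). f i j)) =
    (\<Sum>p | p permutes {0..<n}. signof p * (\<Prod>i = 0..<n. f i (p i)))"
proof -
  have "p i < n" if "p permutes {0..<n}" "i < n" for p i
    using that permutes_in_image by fastforce
  then show ?thesis
    by (subst det_def'[of _ n]) (auto intro!: sum.cong prod.cong)
qed

lemma tendsto_det_mat:
  fixes f :: "'a \<Rightarrow> nat \<Rightarrow> nat \<Rightarrow> 'b::{real_normed_algebra_1, comm_ring_1}"
  assumes "\<And>i j. i < n \<Longrightarrow> j < n \<Longrightarrow> ((\<lambda>t. f t i j) \<longlongrightarrow> g i j) F"
  shows "((\<lambda>t. det (mat n n (\<lambda>(i, j). f t i j))) \<longlongrightarrow> det (mat n n (\<lambda>(i, j). g i j))) F"
proof -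
  have "p i < n" if "p permutes {0..<n}" "i < n" for p i
    using that permutes_in_image by fastforce
  then show ?thesis
    unfolding det_mat_Leibniz by (auto intro!: tendsto_intros assms)
qed

lemma det_mat_lower_triangular:
  assumes "\<And>i j. i < j \<Longrightarrow> j < n \<Longrightarrow> f i j = 0"
  shows "det (mat n n (\<lambda>(i, j). f i j)) = (\<Prod>i<n. f i i)"
proof -
  have "det (mat n n (\<lambda>(i, j). f i j)) = prod_list (diag_mat (mat n n (\<lambda>(i, j). f i j)))"
    by (rule det_lower_triangular[of n]) (auto simp: assms)
  also have "\<dots> = prod_list (map (\<lambda>i. f i i) [0..<n])"
    by (auto simp: diag_mat_def intro!: arg_cong[where f = prod_list])
  also have "\<dots> = (\<Prod>i<n. f i i)"
    by (simp add: prod.distinct_set_conv_list[symmetric] atLeast0LessThan)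
  finally show ?thesis .
qed

lemma casorati_det_eq_det_diff_quot:
  assumes "h \<noteq> 0"
  shows "casorati_det n y h x =
    h ^ (n * (n - 1) div 2) * det (mat n n (\<lambda>(i, j). (diff_quot h ^^ i) (y j) x))"
proof -
  define C where "C = mat n n (\<lambda>(i, j). y j (x + real i * h))"
  define A where "A = mat n n (\<lambda>(i, j). (diff_quot h ^^ i) (y j) x)"
  define D where "D = mat n n (\<lambda>(i, j). if i = j then h ^ i else 0)"
  define L where "L = mat n n (\<lambda>(i, k). (-1) ^ (i - k) * real (i choose k))"
  have "D * A = L * C"
  proof (rule eq_matI)
    fix i j assume "i < dim_row (L * C)" "j < dim_col (L * C)"
    then have ij: "i < n" "j < n" by (auto simp: L_def C_def)
    have "(D * A) $$ (i, j) = (\<Sum>k<n. (if i = k then h ^ i else 0) * (diff_quot h ^^ k) (y j) x)"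
      using ij by (simp add: D_def A_def scalar_prod_def atLeast0LessThan)
    also have "\<dots> = (\<Sum>k<n. if i = k then h ^ i * (diff_quot h ^^ k) (y j) x else 0)"
      by (rule sum.cong) auto
    also have "\<dots> = h ^ i * (diff_quot h ^^ i) (y j) x"
      using ij by simp
    also have "\<dots> = (\<Sum>k\<le>i. (-1) ^ (i - k) * real (i choose k) * y j (x + real k * h))"
      using assms by (rule diff_quot_funpow_binomial)
    also have "\<dots> = (\<Sum>k<n. (-1) ^ (i - k) * real (i choose k) * y j (x + real k * h))"
      using ij by (intro sum.mono_neutral_left) auto
    also have "\<dots> = (L * C) $$ (i, j)"
      using ij by (simp add: L_def C_def scalar_prod_def atLeast0LessThan)
    finally show "(D * A) $$ (i, j) = (L * C) $$ (i, j)" .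
  qed (auto simp: D_def A_def L_def C_def)
  then have "det D * det A = det L * det C"
    using det_mult[of D n A] det_mult[of L n C] by (simp add: D_def A_def L_def C_def)
  moreover have "det D = h ^ (n * (n - 1) div 2)"
    unfolding D_def
    by (subst det_mat_lower_triangular) (auto simp: power_sum[symmetric] lessThan_atLeast0 Sum_Ico_nat)
  moreover have "det L = 1"
    unfolding L_def by (subst det_mat_lower_triangular) auto
  ultimately show ?thesis
    by (simp add: casorati_det_def C_def A_def)
qed

theorem mainTheorem7:
  fixes n :: nat and y :: "nat \<Rightarrow> real \<Rightarrow> real" and I :: "real set" and x :: real
  assumes "open I" and "connected I"
    and "\<And>j. j < n \<Longrightarrow> C_k_on (n - 1) I (y j)"
    and "x \<in> I"
  shows "((\<lambda>h. casorati_det n y h x / h ^ (n * (n - 1) div 2)) \<longlongrightarrow> wronskian n y x) (at 0)"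
proof -
  have "((\<lambda>h. det (mat n n (\<lambda>(i, j). (diff_quot h ^^ i) (y j) x))) \<longlongrightarrow> wronskian n y x) (at 0)"
    unfolding wronskian_def
    using C_k_on_diff_quot_funpow_tendsto[OF assms(3) assms(1,4)] by (intro tendsto_det_mat) simp
  moreover have "\<forall>\<^sub>F h in at 0. det (mat n n (\<lambda>(i, j). (diff_quot h ^^ i) (y j) x)) =
      casorati_det n y h x / h ^ (n * (n - 1) div 2)"
    by (auto simp: eventually_at_filter casorati_det_eq_det_diff_quot)
  ultimately show ?thesis
    by (rule Lim_transform_eventually)
qed

end
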